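(* For all positive integers $n$ and non-negative integers $k$, $$\det_{0\le i,j\le n-1}\Big(\frac{2k+2}{i+j+k+1}\binom{2i+2j-1}{i+j+k}\Big)= \begin{cases} (-1)^{n_1\binom{k+1}2+1}(n_1-1), & n=(k+1)n_1,\\ (-1)^{n_1\binom{k+1}2+k+1}n_1, & n=(k+1)n_1+1,\\ 0, & n\not\equiv0,1\pmod{k+1}, \end{cases}$$ where the $(0,0)$-entry of the matrix is defined to be $0$, and $n_1$ is a non-negative integer (for $k=0$, the first case is meant).
   Context: Binomial coefficients $\binom ab$ with $a\ge0$ are $0$ if $b<0$ or $b>a$. *)

theory Defs
  imports "Jordan_Normal_Form.Determinant"
begin

text \<open>Entry (i,j) of the matrix: (2k+2)/(i+j+k+1) * binom(2i+2j-1, i+j+k),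
  with the (0,0)-entry defined to be 0. For i+j >= 1 the upper index 2i+2j-1 is a
  non-negative integer, so the natural-number binomial coefficient is the intended one.\<close>
definition thm19_entry :: "nat \<Rightarrow> nat \<Rightarrow> nat \<Rightarrow> rat" where
  "thm19_entry k i j =
     (if i = 0 \<and> j = 0 then 0
      else of_nat (2 * k + 2) / of_nat (i + j + k + 1) * of_nat ((2 * i + 2 * j - 1) choose (i + j + k)))"

end

theory Submission
  imports Defs
begin

text \<open>For \<open>i + j \<ge> 1\<close> the entry is the number of paths with \<open>i + j - 1\<close> steps from height \<open>k\<close>
  down to height \<open>0\<close> (ballot numbers), so the matrix is a Hankel matrix of path counts. Multiplying
  it by unitriangular matrices -- path concatenation on the left; on the right alternating sums, a
  Chebyshev change of basis turning path counts into reflection indicators, and summation over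
  residue classes modulo \<open>2k + 2\<close> -- produces a matrix whose last \<open>n - k - 1\<close> rows are unit
  vectors. Up to sign the determinant is then that of a \<open>(k + 1) \<times> (k + 1)\<close> corner whose rows
  \<open>1, \<dots>, k\<close> depend only on \<open>n mod (2k + 2)\<close>: they are a signed (anti)diagonal or contain a zero
  row, and the remaining top entry is an explicit alternating sum.\<close>

definition binom_int :: "nat \<Rightarrow> int \<Rightarrow> int" where
  "binom_int N x = (if x < 0 then 0 else int (N choose nat x))"

lemma binom_int_Suc: "binom_int (Suc N) x = binom_int N (x - 1) + binom_int N x"
proof -
  consider "x < 0" | "x = 0" | "x > 0" by linarith
  then show ?thesis
  proof cases
    case 3
    then have "nat x = Suc (nat (x - 1))" by simp
    with 3 show ?thesis by (simp add: binom_int_def)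
  qed (simp_all add: binom_int_def)
qed

lemma binom_int_symmetric: "binom_int N x = binom_int N (int N - x)"
proof -
  consider "x < 0" | "x > int N" | "0 \<le> x \<and> x \<le> int N" by linarith
  then show ?thesis
  proof cases
    case 3
    then have "nat (int N - x) = N - nat x" by auto
    with 3 show ?thesis by (simp add: binom_int_def binomial_symmetric[symmetric] nat_le_iff)
  qed (simp_all add: binom_int_def binomial_eq_0 nat_less_iff)
qed

text \<open>Paths of \<open>j\<close> steps from height \<open>k\<close> to height \<open>t\<close> that never go below \<open>0\<close>, with up and
  down steps and two kinds of level steps; equivalently Dyck-type paths of \<open>2j\<close> steps, whence the
  reflection formula.\<close>

fun motzkin_paths :: "nat \<Rightarrow> nat \<Rightarrow> nat \<Rightarrow> int" where
  "motzkin_paths k 0 t = (if t = k then 1 else 0)"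
| "motzkin_paths k (Suc j) t =
     (if t = 0 then 0 else motzkin_paths k j (t - 1)) + 2 * motzkin_paths k j t + motzkin_paths k j (Suc t)"

lemma motzkin_paths_reflection:
  "motzkin_paths k j t = binom_int (2*j) (int j + int t - int k) - binom_int (2*j) (int j + int t + int k + 2)"
proof (induction j arbitrary: t)
  case 0
  show ?case by (cases "t = k") (auto simp: binom_int_def binomial_eq_0 zero_less_nat_eq)
next
  case (Suc j)
  have pascal2: "binom_int (2 * Suc j) x =
      binom_int (2*j) (x - 2) + 2 * binom_int (2*j) (x - 1) + binom_int (2*j) x" for x
    by (simp add: binom_int_Suc algebra_simps)
  have reflected: "binom_int (2*j) (int j - 1 - int k) = binom_int (2*j) (int j + int k + 1)"
    using binom_int_symmetric[of "2*j" "int j - 1 - int k"] by (simp add: algebra_simps)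
  show ?case
  proof (cases t)
    case 0
    with reflected show ?thesis unfolding motzkin_paths.simps Suc.IH pascal2 by (simp add: algebra_simps)
  next
    case (Suc s)
    then show ?thesis unfolding motzkin_paths.simps Suc.IH pascal2 by (simp add: algebra_simps)
  qed
qed

lemma motzkin_paths_eq_0_above: "k + j < t \<Longrightarrow> motzkin_paths k j t = 0"
  by (simp add: motzkin_paths_reflection binom_int_def binomial_eq_0 nat_less_iff)

lemma motzkin_paths_eq_0_below: "t + j < k \<Longrightarrow> motzkin_paths k j t = 0"
  by (simp add: motzkin_paths_reflection binom_int_def binomial_eq_0 nat_less_iff)

lemma motzkin_paths_straight_down: "motzkin_paths j j 0 = 1"
  by (simp add: motzkin_paths_reflection binom_int_def binomial_eq_0 nat_less_iff)

lemma motzkin_paths_concat: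
  "s + a < N \<Longrightarrow> (\<Sum>r<N. motzkin_paths r a s * motzkin_paths k b r) = motzkin_paths k (a + b) s"
proof (induction a arbitrary: s)
  case 0
  then show ?case by (simp add: if_distrib[of "\<lambda>x. x * _"] sum.delta' cong: if_cong)
next
  case (Suc a)
  have "(\<Sum>r<N. motzkin_paths r (Suc a) s * motzkin_paths k b r) =
      (if s = 0 then 0 else \<Sum>r<N. motzkin_paths r a (s - 1) * motzkin_paths k b r)
      + 2 * (\<Sum>r<N. motzkin_paths r a s * motzkin_paths k b r)
      + (\<Sum>r<N. motzkin_paths r a (Suc s) * motzkin_paths k b r)"
    by (simp add: algebra_simps sum.distrib sum_distrib_left)
  also have "\<dots> = motzkin_paths k (Suc a + b) s"
    using Suc by simp
  finally show ?case .
qed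

lemma alternating_sum_motzkin_paths:
  assumes "k + j < N"
  shows "(\<Sum>t<N. (-1)^t * motzkin_paths k j t) = (if j = 0 then (-1)^k else motzkin_paths k (j - 1) 0)"
proof (cases j)
  case 0
  have "(\<Sum>t<N. (-1)^t * motzkin_paths k j t) = (\<Sum>t<N. if t = k then (-1)^k else 0)"
    by (rule sum.cong) (simp_all add: 0)
  with assms 0 show ?thesis by simp
next
  case (Suc i)
  define g where "g = motzkin_paths k i"
  obtain M where N: "N = Suc (Suc M)"
    using assms Suc by (cases N; cases "N - 1") auto
  have g_top: "g (Suc M) = 0" "g (Suc (Suc M)) = 0"
    using assms N Suc by (auto simp: g_def intro!: motzkin_paths_eq_0_above)
  define A where "A = (\<Sum>t<Suc M. (-1)^t * g t)"
  have left: "(\<Sum>t<N. (-1)^t * (if t = 0 then 0 else g (t - 1))) = - A"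
    unfolding N by (subst sum.lessThan_Suc_shift) (simp add: A_def sum_negf)
  have middle: "(\<Sum>t<N. (-1)^t * g t) = A"
    by (simp add: N A_def g_top)
  have "A = g 0 - (\<Sum>t<Suc M. (-1)^t * g (Suc t))"
    using middle unfolding N by (subst (asm) sum.lessThan_Suc_shift) (simp add: sum_negf)
  then have right: "(\<Sum>t<N. (-1)^t * g (Suc t)) = g 0 - A"
    by (simp add: N g_top)
  have "(\<Sum>t<N. (-1)^t * motzkin_paths k j t) =
      (\<Sum>t<N. (-1)^t * (if t = 0 then 0 else g (t - 1))) + 2 * (\<Sum>t<N. (-1)^t * g t)
      + (\<Sum>t<N. (-1)^t * g (Suc t))"
    unfolding Suc g_def by (simp add: algebra_simps sum.distrib sum_distrib_left)
  also have "\<dots> = g 0"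
    unfolding left middle right by simp
  finally show ?thesis
    by (simp add: Suc g_def)
qed

lemma Suc_times_binomial_Suc_int: "int (Suc a) * int (n choose Suc a) = (int n - int a) * int (n choose a)"
proof (cases "a \<le> n")
  case True
  have "Suc a * (n choose Suc a) = (n - a) * (n choose a)"
    unfolding binomial_absorption binomial_absorb_comp ..
  then have "int (Suc a * (n choose Suc a)) = int ((n - a) * (n choose a))"
    by (rule arg_cong)
  with True show ?thesis
    by (simp only: of_nat_mult of_nat_diff)
qed (simp add: binomial_eq_0)

lemma binomial_ratio_identity:
  fixes a b x y z :: int
  assumes y: "(a + b + 1) * y = (a - b) * x" and z: "(a + b + 2) * z = (a - b - 1) * y"
    and nonzero: "a + b + 1 \<noteq> 0"
  shows "(2*b + 2) * (x + y) = (a + b + 2) * (x - z)"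
proof -
  have z': "(a + b + 1) * ((a + b + 2) * z) = (a - b - 1) * ((a - b) * x)"
    by (metis y z mult.left_commute)
  have "(a + b + 1) * ((2*b + 2) * (x + y)) = (2*b + 2) * ((a + b + 1) * x) + (2*b + 2) * ((a + b + 1) * y)"
    by (simp add: algebra_simps)
  also have "\<dots> = (a + b + 2) * ((a + b + 1) * x) - (a - b - 1) * ((a - b) * x)"
    unfolding y by (simp add: algebra_simps)
  also have "\<dots> = (a + b + 1) * ((a + b + 2) * (x - z))"
    unfolding right_diff_distrib z' by (simp add: algebra_simps)
  finally show ?thesis
    using nonzero by simp
qed

lemma motzkin_paths_to_ground:
  "int (2*k + 2) * int ((2*m + 1) choose (m + k + 1)) = int (m + k + 2) * motzkin_paths k m 0"
proof (cases "k \<le> m")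
  case False
  then show ?thesis by (simp add: binomial_eq_0 motzkin_paths_eq_0_below)
next
  case True
  define x where "x = int (2*m choose (m + k))"
  define y where "y = int (2*m choose (m + k + 1))"
  define z where "z = int (2*m choose (m + k + 2))"
  have paths: "motzkin_paths k m 0 = x - z"
    using binom_int_symmetric[of "2*m" "int m - int k"] True
    by (simp add: motzkin_paths_reflection binom_int_def x_def z_def nat_add_distrib algebra_simps)
  have pascal: "int ((2*m + 1) choose (m + k + 1)) = x + y"
    by (simp add: x_def y_def)
  have y_x: "(int m + int k + 1) * y = (int m - int k) * x"
    using Suc_times_binomial_Suc_int[of "m + k" "2*m"] by (simp add: x_def y_def algebra_simps)
  have z_y: "(int m + int k + 2) * z = (int m - int k - 1) * y"
    using Suc_times_binomial_Suc_int[of "m + k + 1" "2*m"] by (simp add: y_def z_def algebra_simps)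
  have "(2 * int k + 2) * (x + y) = (int m + int k + 2) * (x - z)"
    using binomial_ratio_identity[OF y_x z_y] by simp
  then show ?thesis
    unfolding pascal paths by (simp add: algebra_simps)
qed

text \<open>\<open>chebyshev_coeff i j\<close> is the coefficient of \<open>x^i\<close> in the polynomial \<open>p\<^sub>j\<close> determined by
  \<open>p\<^sub>j(s + 2 + 1/s) = s^j + s^-j\<close> for \<open>j > 0\<close> and \<open>p\<^sub>0 = 1\<close>, a rescaled Chebyshev polynomial.
  Pairing it with the path counts, which are the coefficients of \<open>(s + 2 + 1/s)^i\<close> corrected by
  reflection, gives \<open>chebyshev_moment\<close>.\<close>

fun chebyshev_coeff :: "nat \<Rightarrow> nat \<Rightarrow> int" where
  "chebyshev_coeff i 0 = (if i = 0 then 1 else 0)"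
| "chebyshev_coeff i (Suc 0) = (if i = 1 then 1 else 0) - (if i = 0 then 2 else 0)"
| "chebyshev_coeff i (Suc (Suc j)) =
     (if i = 0 then 0 else chebyshev_coeff (i - 1) (Suc j)) - 2 * chebyshev_coeff i (Suc j)
     - (if j = 0 then 2 else 1) * chebyshev_coeff i j"

definition chebyshev_moment :: "nat \<Rightarrow> nat \<Rightarrow> nat \<Rightarrow> int" where
  "chebyshev_moment k j t = (if t = j + k \<or> j + t = k then 1 else 0) - (if j = t + k + 2 then 1 else 0)"

lemma chebyshev_coeff_eq_0: "j < i \<Longrightarrow> chebyshev_coeff i j = 0"
  by (induction i j rule: chebyshev_coeff.induct) auto

lemma chebyshev_coeff_diag: "chebyshev_coeff j j = 1"
  by (induction j rule: induct_nat_012) (simp_all add: chebyshev_coeff_eq_0)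

lemma chebyshev_coeff_0: "chebyshev_coeff 0 j = (if j = 0 then 1 else 2 * (-1)^j)"
  by (induction j rule: induct_nat_012) auto

lemma chebyshev_moment_Suc_Suc:
  "chebyshev_moment k (Suc (Suc j)) t =
     (if t = 0 then 0 else chebyshev_moment k (Suc j) (t - 1)) + chebyshev_moment k (Suc j) (Suc t)
     - (if j = 0 then 2 else 1) * chebyshev_moment k j t"
  by (cases t) (auto simp: chebyshev_moment_def)

lemma sum_motzkin_paths_chebyshev_coeff:
  "j < N \<Longrightarrow> (\<Sum>i<N. motzkin_paths k i t * chebyshev_coeff i j) = chebyshev_moment k j t"
proof (induction j arbitrary: t N rule: induct_nat_012)
  case 0
  then have "(\<Sum>i<N. motzkin_paths k i t * chebyshev_coeff i 0) = motzkin_paths k 0 t"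
    by (simp add: if_distrib[of "\<lambda>x. _ * x"] sum.delta' cong: if_cong)
  then show ?case by (simp add: chebyshev_moment_def)
next
  case 1
  then have "(\<Sum>i<N. motzkin_paths k i t * chebyshev_coeff i 1) =
      motzkin_paths k 1 t - 2 * motzkin_paths k 0 t"
    by (simp add: right_diff_distrib sum_subtractf if_distrib[of "\<lambda>x. _ * x"] sum.delta' cong: if_cong)
  then show ?case by (cases t) (auto simp: chebyshev_moment_def)
next
  case (ge2 j)
  obtain N' where N: "N = Suc N'" using ge2.prems by (cases N) auto
  have shifted: "(\<Sum>i<N. motzkin_paths k i t * (if i = 0 then 0 else chebyshev_coeff (i - 1) (Suc j)))
      = (if t = 0 then 0 else chebyshev_moment k (Suc j) (t - 1)) + 2 * chebyshev_moment k (Suc j) t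
        + chebyshev_moment k (Suc j) (Suc t)"
  proof -
    have "(\<Sum>i<N. motzkin_paths k i t * (if i = 0 then 0 else chebyshev_coeff (i - 1) (Suc j)))
        = (\<Sum>i<N'. motzkin_paths k (Suc i) t * chebyshev_coeff i (Suc j))"
      unfolding N by (subst sum.lessThan_Suc_shift) simp
    also have "\<dots> = (if t = 0 then 0 else \<Sum>i<N'. motzkin_paths k i (t - 1) * chebyshev_coeff i (Suc j))
        + 2 * (\<Sum>i<N'. motzkin_paths k i t * chebyshev_coeff i (Suc j))
        + (\<Sum>i<N'. motzkin_paths k i (Suc t) * chebyshev_coeff i (Suc j))"
      by (simp add: algebra_simps sum.distrib sum_distrib_left)
    finally show ?thesis
      using ge2.IH(2) ge2.prems N by simp
  qed
  have "(\<Sum>i<N. motzkin_paths k i t * chebyshev_coeff i (Suc (Suc j))) =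
      (\<Sum>i<N. motzkin_paths k i t * (if i = 0 then 0 else chebyshev_coeff (i - 1) (Suc j)))
      - 2 * (\<Sum>i<N. motzkin_paths k i t * chebyshev_coeff i (Suc j))
      - (if j = 0 then 2 else 1) * (\<Sum>i<N. motzkin_paths k i t * chebyshev_coeff i j)"
    unfolding sum_distrib_left sum_subtractf[symmetric] by (rule sum.cong) (simp_all add: algebra_simps)
  also have "\<dots> = chebyshev_moment k (Suc (Suc j)) t"
    unfolding shifted chebyshev_moment_Suc_Suc using ge2 by simp
  finally show ?case .
qed

definition progression :: "nat \<Rightarrow> nat \<Rightarrow> nat \<Rightarrow> int" where
  "progression P u v = (if u \<le> v \<and> (v - u) mod P = 0 then 1 else 0)"

lemma progression_shift: "progression P (u + P) v = (if P \<le> v then progression P u (v - P) else 0)"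
  by (auto simp: progression_def diff_diff_add add.commute)

lemma progression_small_start:
  assumes "u < P"
  shows "progression P u v = (if v mod P = u then 1 else 0)"
proof -
  have "u \<le> v \<and> (v - u) mod P = 0 \<longleftrightarrow> v mod P = u"
    using assms mod_less_eq_dividend[of v P]
    by (auto simp: dvd_eq_mod_eq_0[symmetric] mod_eq_dvd_iff_nat[symmetric])
  then show ?thesis by (simp add: progression_def)
qed

lemma progression_step:
  assumes "0 < P"
  shows "progression P u v = (if v = u then 1 else 0) + (if P \<le> v then progression P u (v - P) else 0)"
proof (cases "u + P \<le> v")
  case True
  then have "(v - u) mod P = (v - P - u) mod P"
    by (simp add: le_mod_geq diff_diff_add add.commute)
  with True assms show ?thesis by (auto simp: progression_def)
next
  case False
  with assms show ?thesis by (auto simp: progression_def)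
qed

lemma progression_diff:
  "0 < P \<Longrightarrow> progression P u v - progression P (u + P) v = (if v = u then 1 else 0)"
  by (simp add: progression_step[of P u v] progression_shift)

lemma index_mult_mat_sum:
  assumes "A \<in> carrier_mat m n" "B \<in> carrier_mat n p" "i < m" "j < p"
  shows "(A * B) $$ (i, j) = (\<Sum>c<n. A $$ (i, c) * B $$ (c, j))"
  using assms by (simp add: scalar_prod_def atLeast0LessThan)

lemma det_upper_unitriangular:
  assumes A: "A \<in> carrier_mat n n"
    and below: "\<And>i j. i < n \<Longrightarrow> j < i \<Longrightarrow> A $$ (i, j) = 0"
    and diag: "\<And>i. i < n \<Longrightarrow> A $$ (i, i) = 1"
  shows "det A = 1"
proof -
  have "upper_triangular A"
    using A below unfolding upper_triangular_def by auto
  with A have "det A = prod_list (diag_mat A)"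
    using det_upper_triangular by blast
  with A diag show ?thesis
    unfolding prod_list_diag_prod by simp
qed

lemma det_lower_unitriangular:
  assumes A: "A \<in> carrier_mat n n"
    and above: "\<And>i j. i < j \<Longrightarrow> j < n \<Longrightarrow> A $$ (i, j) = 0"
    and diag: "\<And>i. i < n \<Longrightarrow> A $$ (i, i) = 1"
  shows "det A = 1"
  using det_lower_triangular[OF above A] A diag unfolding prod_list_diag_prod by simp

lemma det_zero_row:
  assumes A: "(A :: 'a :: comm_ring_1 mat) \<in> carrier_mat n n" and i: "i < n"
    and zero: "\<And>j. j < n \<Longrightarrow> A $$ (i, j) = 0"
  shows "det A = 0"
  using laplace_expansion_row[OF A i] zero by simp

lemma det_expand_column_top:
  assumes A: "(A :: 'a :: comm_ring_1 mat) \<in> carrier_mat (Suc m) (Suc m)" and j: "j < Suc m"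
    and zero: "\<And>i. 0 < i \<Longrightarrow> i < Suc m \<Longrightarrow> A $$ (i, j) = 0"
  shows "det A = A $$ (0, j) * (-1)^j * det (mat m m (\<lambda>(i, l). A $$ (Suc i, if l < j then l else Suc l)))"
proof -
  have minor: "mat_delete A 0 j = mat m m (\<lambda>(i, l). A $$ (Suc i, if l < j then l else Suc l))"
    unfolding mat_delete_def using A by auto
  have "det A = (\<Sum>i<Suc m. A $$ (i, j) * cofactor A i j)"
    by (rule laplace_expansion_column[OF A j])
  also have "\<dots> = A $$ (0, j) * cofactor A 0 j"
    by (subst sum.lessThan_Suc_shift) (simp add: zero)
  finally show ?thesis
    unfolding cofactor_def minor by simp
qed

lemma Suc_choose_two: "Suc k choose 2 = k + (k choose 2)"
  using binomial_Suc_Suc[of k 1] by (simp add: numeral_2_eq_2)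

lemma det_antidiagonal:
  "det (mat m m (\<lambda>(i, j). if i + j + 1 = m then 1 else 0) :: 'a :: comm_ring_1 mat) = (-1)^(m choose 2)"
proof (induction m)
  case 0
  show ?case by (simp add: binomial_eq_0)
next
  case (Suc m)
  let ?A = "mat (Suc m) (Suc m) (\<lambda>(i, j). if i + j + 1 = Suc m then 1 else 0) :: 'a mat"
  have "det ?A = ?A $$ (0, m) * (-1)^m *
      det (mat m m (\<lambda>(i, l). ?A $$ (Suc i, if l < m then l else Suc l)))"
    by (rule det_expand_column_top) auto
  also have "mat m m (\<lambda>(i, l). ?A $$ (Suc i, if l < m then l else Suc l)) =
      mat m m (\<lambda>(i, j). if i + j + 1 = m then 1 else 0)"
    by (rule eq_matI) auto
  finally have "det ?A = (-1)^(m + (m choose 2))"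
    using Suc by (simp add: power_add)
  then show ?case
    by (simp add: Suc_choose_two)
qed

lemma det_shifted_unit_rows:
  fixes A :: "'a :: idom mat"
  assumes A: "A \<in> carrier_mat n n" and p: "p \<le> n"
    and unit_rows: "\<And>r c. p \<le> r \<Longrightarrow> r < n \<Longrightarrow> c < n \<Longrightarrow>
      A $$ (r, c) = (if c + p = r then 1 else 0)"
  shows "det A = (-1)^(p * (n - p)) * det (mat p p (\<lambda>(i, j). A $$ (i, n - p + j)))"
proof -
  define m where "m = n - p"
  have n: "n = p + m" using p by (simp add: m_def)
  let ?B = "mat (p + m) (p + m) (\<lambda>(i, j). A $$ (i, if j < p then j + m else j - p))"
  let ?Y = "mat p p (\<lambda>(i, j). A $$ (i, n - p + j))"
  let ?X = "mat p m (\<lambda>(i, j). A $$ (i, j))"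
  have "det A = (-1)^(p * m) * det ?B"
    by (rule det_swap_cols) (use A n in simp)
  also have "?B = four_block_mat ?Y ?X (0\<^sub>m m p) (1\<^sub>m m)"
  proof (rule eq_matI)
    fix i j
    assume "i < dim_row (four_block_mat ?Y ?X (0\<^sub>m m p) (1\<^sub>m m))"
      and "j < dim_col (four_block_mat ?Y ?X (0\<^sub>m m p) (1\<^sub>m m))"
    then have i: "i < p + m" and j: "j < p + m" by auto
    show "?B $$ (i, j) = four_block_mat ?Y ?X (0\<^sub>m m p) (1\<^sub>m m) $$ (i, j)"
    proof (cases "i < p")
      case True
      with i j show ?thesis by (cases "j < p") (simp_all add: n add.commute)
    next
      case False
      with i j unit_rows[of i "if j < p then j + m else j - p"] show ?thesis
        by (cases "j < p") (auto simp: n)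
    qed
  qed auto
  also have "det (four_block_mat ?Y ?X (0\<^sub>m m p) (1\<^sub>m m)) = det ?Y * det (1\<^sub>m m :: 'a mat)"
    by (rule det_four_block_mat_lower_left_zero) auto
  finally show ?thesis
    by (simp add: m_def)
qed

definition hankel :: "nat \<Rightarrow> nat \<Rightarrow> int mat" where
  "hankel k n = mat n n (\<lambda>(i, j). if i + j = 0 then 0 else motzkin_paths k (i + j - 1) 0)"

definition path_mat :: "nat \<Rightarrow> int mat" where
  "path_mat n = mat n n (\<lambda>(r, c).
     if r = 0 then (if c = 0 then 1 else 0) else if c = 0 then 0 else motzkin_paths (c - 1) (r - 1) 0)"

definition alternating_mat :: "nat \<Rightarrow> int mat" where
  "alternating_mat n = mat n n (\<lambda>(r, c). if r = c then 1 else if r = 0 then (-1)^(c - 1) else 0)"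

text \<open>Row 0 of \<open>paths_mat\<close> is chosen so that, by \<open>alternating_sum_motzkin_paths\<close>, it turns into the
  counts of paths to height 0 after multiplication by \<open>alternating_mat\<close>, while its product with
  \<open>chebyshev_mat\<close> stays explicit (\<open>moment_row0\<close>).\<close>

definition paths_mat :: "nat \<Rightarrow> nat \<Rightarrow> int mat" where
  "paths_mat k n = mat n n (\<lambda>(r, j).
     if r = 0 then (\<Sum>t\<in>{n - 1..<n + k + 1}. (-1)^t * motzkin_paths k j t) - (if j = 0 then (-1)^k else 0)
     else motzkin_paths k j (r - 1))"

definition chebyshev_mat :: "nat \<Rightarrow> int mat" where
  "chebyshev_mat n = mat n n (\<lambda>(i, j). chebyshev_coeff i j)"

definition moment_row0 :: "nat \<Rightarrow> nat \<Rightarrow> nat \<Rightarrow> int" where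
  "moment_row0 k n u = (if n \<le> k + u + 1 then (-1)^(k + u) else 0) - (-1)^k * chebyshev_coeff 0 u"

definition moment_mat :: "nat \<Rightarrow> nat \<Rightarrow> int mat" where
  "moment_mat k n = mat n n (\<lambda>(r, j). if r = 0 then moment_row0 k n j else chebyshev_moment k j (r - 1))"

definition progression_mat :: "nat \<Rightarrow> nat \<Rightarrow> int mat" where
  "progression_mat k n = mat n n (\<lambda>(u, v). progression (2*k + 2) u v)"

lemma alternating_mat_times_paths_mat:
  assumes "c < n" "j < n"
  shows "(alternating_mat n * paths_mat k n) $$ (c, j) =
    (if c = 0 then (if j = 0 then 0 else motzkin_paths k (j - 1) 0) else motzkin_paths k j (c - 1))"
proof -
  obtain n' where n: "n = Suc n'" using assms by (cases n) auto
  have prod: "(alternating_mat n * paths_mat k n) $$ (c, j) =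
      (\<Sum>c'<n. alternating_mat n $$ (c, c') * paths_mat k n $$ (c', j))"
    by (rule index_mult_mat_sum) (auto simp: alternating_mat_def paths_mat_def assms)
  show ?thesis
  proof (cases "c = 0")
    case False
    then have "(\<Sum>c'<n. alternating_mat n $$ (c, c') * paths_mat k n $$ (c', j)) = paths_mat k n $$ (c, j)"
      using assms by (simp add: alternating_mat_def if_distrib[of "\<lambda>x. x * _"] sum.delta cong: if_cong)
    with prod False assms show ?thesis
      by (simp add: paths_mat_def)
  next
    case True
    have "(\<Sum>c'<n. alternating_mat n $$ (c, c') * paths_mat k n $$ (c', j)) =
        paths_mat k n $$ (0, j) + (\<Sum>t<n'. (-1)^t * motzkin_paths k j t)"
      unfolding n sum.lessThan_Suc_shift using True assms n by (simp add: alternating_mat_def paths_mat_def)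
    also have "\<dots> = (\<Sum>t<n' + k + 2. (-1)^t * motzkin_paths k j t) - (if j = 0 then (-1)^k else 0)"
    proof -
      have "(\<Sum>t<n'. (-1)^t * motzkin_paths k j t)
          + (\<Sum>t\<in>{n'..<n' + k + 2}. (-1)^t * motzkin_paths k j t) =
          (\<Sum>t<n' + k + 2. (-1)^t * motzkin_paths k j t)"
        unfolding lessThan_atLeast0 by (rule sum.atLeastLessThan_concat) auto
      with assms show ?thesis
        by (simp add: paths_mat_def n)
    qed
    also have "\<dots> = (if j = 0 then 0 else motzkin_paths k (j - 1) 0)"
      using alternating_sum_motzkin_paths[of k j "n' + k + 2"] assms n by simp
    finally show ?thesis
      using prod True by simp
  qed
qed

lemma hankel_factorization:
  assumes "0 < n"
  shows "hankel k n = path_mat n * (alternating_mat n * paths_mat k n)"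
proof (rule eq_matI)
  fix i j
  assume "i < dim_row (path_mat n * (alternating_mat n * paths_mat k n))"
    and "j < dim_col (path_mat n * (alternating_mat n * paths_mat k n))"
  then have i: "i < n" and j: "j < n" by (auto simp: path_mat_def paths_mat_def)
  obtain n' where n: "n = Suc n'" using assms by (cases n) auto
  have prod: "(path_mat n * (alternating_mat n * paths_mat k n)) $$ (i, j) =
      (\<Sum>c<n. path_mat n $$ (i, c) * (alternating_mat n * paths_mat k n) $$ (c, j))"
    by (rule index_mult_mat_sum) (auto simp: alternating_mat_def path_mat_def paths_mat_def i j)
  show "hankel k n $$ (i, j) = (path_mat n * (alternating_mat n * paths_mat k n)) $$ (i, j)"
  proof (cases "i = 0")
    case True
    then have "(\<Sum>c<n. path_mat n $$ (i, c) * (alternating_mat n * paths_mat k n) $$ (c, j)) =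
        (alternating_mat n * paths_mat k n) $$ (0, j)"
      using assms by (simp add: path_mat_def if_distrib[of "\<lambda>x. x * _"] sum.delta cong: if_cong)
    with prod True i j assms show ?thesis
      by (simp add: hankel_def alternating_mat_times_paths_mat)
  next
    case False
    have "(\<Sum>c<n. path_mat n $$ (i, c) * (alternating_mat n * paths_mat k n) $$ (c, j)) =
        (\<Sum>r<n'. motzkin_paths r (i - 1) 0 * motzkin_paths k j r)"
      unfolding n sum.lessThan_Suc_shift using False i j n
      by (simp add: path_mat_def alternating_mat_times_paths_mat)
    also have "\<dots> = motzkin_paths k (i - 1 + j) 0"
      by (rule motzkin_paths_concat) (use i n False in auto)
    finally show ?thesis
      using prod False i j by (simp add: hankel_def)
  qed
qed (auto simp: hankel_def path_mat_def paths_mat_def)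

lemma chebyshev_moment_high:
  "k < t \<Longrightarrow> j \<le> t \<Longrightarrow> chebyshev_moment k j t = (if t = j + k then 1 else 0)"
  by (auto simp: chebyshev_moment_def)

lemma paths_mat_times_chebyshev_mat:
  assumes n: "k + 2 \<le> n"
  shows "paths_mat k n * chebyshev_mat n = moment_mat k n"
proof (rule eq_matI)
  fix r j
  assume "r < dim_row (moment_mat k n)" and "j < dim_col (moment_mat k n)"
  then have r: "r < n" and j: "j < n" by (auto simp: moment_mat_def)
  have prod: "(paths_mat k n * chebyshev_mat n) $$ (r, j) =
      (\<Sum>i<n. paths_mat k n $$ (r, i) * chebyshev_mat n $$ (i, j))"
    by (rule index_mult_mat_sum) (auto simp: paths_mat_def chebyshev_mat_def r j)
  show "(paths_mat k n * chebyshev_mat n) $$ (r, j) = moment_mat k n $$ (r, j)"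
  proof (cases "r = 0")
    case False
    have "(\<Sum>i<n. paths_mat k n $$ (r, i) * chebyshev_mat n $$ (i, j)) =
        (\<Sum>i<n. motzkin_paths k i (r - 1) * chebyshev_coeff i j)"
      by (rule sum.cong) (auto simp: paths_mat_def chebyshev_mat_def r j False)
    also have "\<dots> = chebyshev_moment k j (r - 1)"
      by (rule sum_motzkin_paths_chebyshev_coeff) (rule j)
    finally show ?thesis
      using prod False r j by (simp add: moment_mat_def)
  next
    case True
    define T where "T = {n - 1..<n + k + 1}"
    have "(\<Sum>i<n. paths_mat k n $$ (r, i) * chebyshev_mat n $$ (i, j)) =
        (\<Sum>i<n. (\<Sum>t\<in>T. (-1)^t * motzkin_paths k i t) * chebyshev_coeff i j
           - (if i = 0 then (-1)^k * chebyshev_coeff 0 j else 0))"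
      by (rule sum.cong) (auto simp: paths_mat_def chebyshev_mat_def True T_def algebra_simps j)
    also have "\<dots> = (\<Sum>t\<in>T. (-1)^t * (\<Sum>i<n. motzkin_paths k i t * chebyshev_coeff i j))
        - (-1)^k * chebyshev_coeff 0 j"
      using n by (simp add: sum_subtractf sum_distrib_right sum_distrib_left algebra_simps sum.swap[of _ T])
    also have "\<dots> = (\<Sum>t\<in>T. (-1)^t * chebyshev_moment k j t) - (-1)^k * chebyshev_coeff 0 j"
      using sum_motzkin_paths_chebyshev_coeff[OF j] by simp
    also have "(\<Sum>t\<in>T. (-1)^t * chebyshev_moment k j t) =
        (\<Sum>t\<in>T. if t = j + k then (-1)^(j + k) else 0)"
      by (rule sum.cong) (use n j in \<open>auto simp: chebyshev_moment_high T_def\<close>)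
    also have "\<dots> = (if n \<le> k + j + 1 then (-1)^(k + j) else 0)"
      using j by (auto simp: T_def add.commute)
    finally show ?thesis
      using prod True j by (simp add: moment_mat_def moment_row0_def)
  qed
qed (auto simp: paths_mat_def chebyshev_mat_def moment_mat_def)

text \<open>Right multiplication by \<open>progression_mat\<close> replaces column \<open>v\<close> by the sum of columns
  \<open>v, v - (2k + 2), v - 2(2k + 2), \<dots>\<close>, which telescopes the reflected pairs in the rows of
  \<open>moment_mat\<close>.\<close>

definition reduced_mat :: "nat \<Rightarrow> nat \<Rightarrow> int mat" where
  "reduced_mat k n = moment_mat k n * progression_mat k n"

lemma det_hankel_eq_det_reduced_mat:
  assumes n: "k + 2 \<le> n"
  shows "det (hankel k n) = det (reduced_mat k n)"
proof -
  have carrier: "path_mat n \<in> carrier_mat n n" "alternating_mat n \<in> carrier_mat n n"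
    "paths_mat k n \<in> carrier_mat n n" "chebyshev_mat n \<in> carrier_mat n n"
    "progression_mat k n \<in> carrier_mat n n" "moment_mat k n \<in> carrier_mat n n"
    by (auto simp: path_mat_def alternating_mat_def paths_mat_def chebyshev_mat_def
      progression_mat_def moment_mat_def)
  have "det (path_mat n) = 1"
    by (rule det_lower_unitriangular[OF carrier(1)])
      (auto simp: path_mat_def motzkin_paths_eq_0_below motzkin_paths_straight_down)
  moreover have "det (alternating_mat n) = 1"
    by (rule det_upper_unitriangular[OF carrier(2)]) (auto simp: alternating_mat_def)
  moreover have "0 < n"
    using n by simp
  ultimately have "det (hankel k n) = det (paths_mat k n)"
    unfolding hankel_factorization[OF \<open>0 < n\<close>] using carrier by (simp add: det_mult[of _ n])
  also have "\<dots> = det (moment_mat k n)"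
  proof -
    have "det (chebyshev_mat n) = 1"
      by (rule det_upper_unitriangular[OF carrier(4)])
        (auto simp: chebyshev_mat_def chebyshev_coeff_eq_0 chebyshev_coeff_diag)
    then show ?thesis
      unfolding paths_mat_times_chebyshev_mat[OF n, symmetric] using carrier by (simp add: det_mult[of _ n])
  qed
  also have "\<dots> = det (reduced_mat k n)"
  proof -
    have "det (progression_mat k n) = 1"
      by (rule det_upper_unitriangular[OF carrier(5)]) (auto simp: progression_mat_def progression_def)
    then show ?thesis
      using carrier by (simp add: reduced_mat_def det_mult[of _ n])
  qed
  finally show ?thesis .
qed

lemma reduced_mat_entry:
  assumes "r < n" "v < n"
  shows "reduced_mat k n $$ (r, v) = (\<Sum>u<n. moment_mat k n $$ (r, u) * progression (2*k + 2) u v)"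
  unfolding reduced_mat_def
  by (subst index_mult_mat_sum[of _ n n]) (auto simp: moment_mat_def progression_mat_def assms)

lemma reduced_mat_row0:
  assumes "v < n"
  shows "reduced_mat k n $$ (0, v) = (\<Sum>u<n. moment_row0 k n u * progression (2*k + 2) u v)"
  using assms by (simp add: reduced_mat_entry moment_mat_def)

lemma reduced_mat_two_point:
  assumes r: "r < n" and v: "v < n"
    and row: "\<And>u. u < n \<Longrightarrow>
      moment_mat k n $$ (r, u) = (if u = a then 1 else 0) - (if u = b then 1 else 0)"
  shows "reduced_mat k n $$ (r, v) = progression (2*k + 2) a v - progression (2*k + 2) b v"
proof -
  have outside: "progression (2*k + 2) c v = 0" if "n \<le> c" for c
    using that v by (simp add: progression_def)
  have "reduced_mat k n $$ (r, v) =
      (\<Sum>u<n. if u = a then progression (2*k + 2) u v else 0)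
      - (\<Sum>u<n. if u = b then progression (2*k + 2) u v else 0)"
    unfolding reduced_mat_entry[OF r v] sum_subtractf[symmetric] by (rule sum.cong) (auto simp: row)
  also have "\<dots> = progression (2*k + 2) a v - progression (2*k + 2) b v"
    using outside by (simp add: sum.delta' not_less)
  finally show ?thesis .
qed

lemma reduced_mat_low_row:
  assumes "k + 1 \<le> r" "r < n" "v < n"
  shows "reduced_mat k n $$ (r, v) = (if v + k + 1 = r then 1 else 0)"
proof -
  have "reduced_mat k n $$ (r, v) =
      progression (2*k + 2) (r - 1 - k) v - progression (2*k + 2) (r - 1 - k + (2*k + 2)) v"
    by (rule reduced_mat_two_point) (use assms in \<open>auto simp: moment_mat_def chebyshev_moment_def\<close>)
  also have "\<dots> = (if v = r - 1 - k then 1 else 0)"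
    by (rule progression_diff) simp
  finally show ?thesis
    using assms by auto
qed

lemma reduced_mat_middle_row:
  assumes "1 \<le> r" "r \<le> k" "r < n" "v < n"
  shows "reduced_mat k n $$ (r, v) =
    progression (2*k + 2) (k + 1 - r) v - progression (2*k + 2) (r + k + 1) v"
  by (rule reduced_mat_two_point) (use assms in \<open>auto simp: moment_mat_def chebyshev_moment_def\<close>)

lemma sum_moment_row0_progression:
  assumes b: "b < 2*k + 2" and v: "b + (2*k + 2) * h < n"
  shows "(\<Sum>u<n. moment_row0 k n u * progression (2*k + 2) u (b + (2*k + 2) * h)) = (-1)^(k + b) *
    ((if n \<le> k + b + (2*k + 2) * h + 1 then 1 else 0) - 2 * int h - (if b = 0 then 1 else 2))"
proof -
  define P where "P = 2*k + 2"
  have step: "(\<Sum>u<n. moment_row0 k n u * progression P u w) =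
      moment_row0 k n w + (if P \<le> w then \<Sum>u<n. moment_row0 k n u * progression P u (w - P) else 0)"
    if "w < n" for w
  proof -
    have "progression P u w = (if w = u then 1 else 0) + (if P \<le> w then progression P u (w - P) else 0)" for u
      by (rule progression_step) (simp add: P_def)
    then have "(\<Sum>u<n. moment_row0 k n u * progression P u w) =
        (\<Sum>u<n. (if u = w then moment_row0 k n u else 0)
          + (if P \<le> w then moment_row0 k n u * progression P u (w - P) else 0))"
      by (intro sum.cong) (simp_all add: algebra_simps)
    with that show ?thesis
      by (simp add: sum.distrib)
  qed
  have row0: "moment_row0 k n (b + P * h') = (-1)^(k + b) *
      ((if n \<le> k + b + P * h' + 1 then 1 else 0) - (if b + P * h' = 0 then 1 else 2))" for h'
    by (simp add: moment_row0_def chebyshev_coeff_0 P_def minus_one_power_iff)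
  from v show ?thesis
    unfolding P_def[symmetric]
  proof (induction h)
    case 0
    with b step[of b] row0[of 0] show ?case
      by (simp add: P_def)
  next
    case (Suc h)
    have "b + P * Suc h - P = b + P * h" "P \<le> b + P * Suc h" "\<not> n \<le> k + b + P * h + 1"
      using Suc.prems by (simp_all add: P_def)
    with Suc step[of "b + P * Suc h"] row0[of "Suc h"] show ?case
      by (simp add: P_def algebra_simps)
  qed
qed

definition corner :: "nat \<Rightarrow> nat \<Rightarrow> int mat" where
  "corner k n = mat (k + 1) (k + 1) (\<lambda>(i, j). reduced_mat k n $$ (i, n - (k + 1) + j))"

lemma reduced_mat_carrier: "reduced_mat k n \<in> carrier_mat n n"
  unfolding reduced_mat_def by (rule mult_carrier_mat[of _ n n]) (simp_all add: moment_mat_def progression_mat_def)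

lemma det_reduced_mat:
  assumes "k + 1 \<le> n"
  shows "det (reduced_mat k n) = (-1)^((k + 1) * (n - (k + 1))) * det (corner k n)"
  unfolding corner_def
  by (rule det_shifted_unit_rows) (use assms in \<open>auto simp: reduced_mat_carrier reduced_mat_low_row\<close>)

lemma corner_carrier: "corner k n \<in> carrier_mat (Suc k) (Suc k)"
  by (simp add: corner_def)

lemma corner_row0:
  assumes "k + 1 \<le> n" "j \<le> k"
    and w: "n - (k + 1) + j = b + (2*k + 2) * h" and b: "b < 2*k + 2"
  shows "corner k n $$ (0, j) = (-1)^(k + b) *
    ((if n \<le> k + b + (2*k + 2) * h + 1 then 1 else 0) - 2 * int h - (if b = 0 then 1 else 2))"
proof -
  have v: "b + (2*k + 2) * h < n"
    using assms by linarith
  have "corner k n $$ (0, j) = reduced_mat k n $$ (0, b + (2*k + 2) * h)"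
    using assms by (simp add: corner_def)
  then show ?thesis
    unfolding reduced_mat_row0[OF v] sum_moment_row0_progression[OF b v] .
qed

lemma corner_entry:
  assumes "k + 1 \<le> n" "1 \<le> i" "i \<le> k" "j \<le> k"
    and w: "n - (k + 1) + j = b + (2*k + 2) * h" and b: "b < 2*k + 2"
  shows "corner k n $$ (i, j) = (if b = k + 1 - i then 1 else 0) - (if b = i + k + 1 then 1 else 0)"
proof -
  have "(n - (k + 1) + j) mod (2*k + 2) = b"
    unfolding w mod_mult_self2 using b by (rule mod_less)
  with assms show ?thesis
    by (simp add: corner_def reduced_mat_middle_row progression_small_start)
qed

lemma det_corner_odd_multiple:
  assumes h: "1 \<le> h" and n: "n = (2*k + 2) * h + (k + 1)"
  shows "det (corner k n) = - 2 * int h * (-1)^k * (-1)^(k choose 2)"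
proof -
  have rows: "corner k n $$ (i, j) = (if i + j = k + 1 then 1 else 0)" if "1 \<le> i" "i \<le> k" "j \<le> k" for i j
    using that corner_entry[of k n i j j h] by (auto simp: n)
  have "det (corner k n) = corner k n $$ (0, 0) * (-1)^0 *
      det (mat k k (\<lambda>(i, l). corner k n $$ (Suc i, if l < 0 then l else Suc l)))"
    by (rule det_expand_column_top[OF corner_carrier]) (auto simp: rows)
  also have "mat k k (\<lambda>(i, l). corner k n $$ (Suc i, if l < 0 then l else Suc l)) =
      mat k k (\<lambda>(i, j). if i + j + 1 = k then 1 else 0)"
    by (rule eq_matI) (auto simp: rows)
  also have "corner k n $$ (0, 0) = - 2 * int h * (-1)^k"
    using corner_row0[of k n 0 0 h] n by simp
  also have "det (mat k k (\<lambda>(i, j). if i + j + 1 = k then 1 else 0) :: int mat) = (-1)^(k choose 2)"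
    by (rule det_antidiagonal)
  finally show ?thesis
    by simp
qed

lemma det_corner_even_multiple:
  assumes n: "n = (2*k + 2) * h + (2*k + 2)"
  shows "det (corner k n) = (2 * int h + 1) * (-1)^k"
proof -
  have rows: "corner k n $$ (i, j) = (if i = j then -1 else 0)" if "1 \<le> i" "i \<le> k" "j \<le> k" for i j
    using that corner_entry[of k n i j "k + 1 + j" h] by (auto simp: n)
  have "det (corner k n) = corner k n $$ (0, 0) * (-1)^0 *
      det (mat k k (\<lambda>(i, l). corner k n $$ (Suc i, if l < 0 then l else Suc l)))"
    by (rule det_expand_column_top[OF corner_carrier]) (auto simp: rows)
  also have "mat k k (\<lambda>(i, l). corner k n $$ (Suc i, if l < 0 then l else Suc l)) = (-1) \<cdot>\<^sub>m 1\<^sub>m k"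
    by (rule eq_matI) (auto simp: rows)
  also have "corner k n $$ (0, 0) = 2 * int h + 1"
    using corner_row0[of k n 0 "k + 1" h] n by (simp add: minus_one_power_iff)
  finally show ?thesis
    by simp
qed

lemma det_corner_even_multiple_Suc:
  assumes h: "1 \<le> h" and n: "n = (2*k + 2) * h + 1"
  shows "det (corner k n) = - 2 * int h * (-1)^k"
proof -
  obtain h' where h': "h = Suc h'"
    using h by (cases h) auto
  have rows: "corner k n $$ (i, j) = (if j + 1 = i then -1 else 0)" if "1 \<le> i" "i \<le> k" "j \<le> k" for i j
  proof (cases "j = k")
    case True
    with that corner_entry[of k n i j 0 h] show ?thesis
      by (auto simp: n h')
  next
    case False
    with that corner_entry[of k n i j "k + 2 + j" h'] show ?thesis
      by (auto simp: n h')
  qed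
  have "det (corner k n) = corner k n $$ (0, k) * (-1)^k *
      det (mat k k (\<lambda>(i, l). corner k n $$ (Suc i, if l < k then l else Suc l)))"
    by (rule det_expand_column_top[OF corner_carrier]) (auto simp: rows)
  also have "mat k k (\<lambda>(i, l). corner k n $$ (Suc i, if l < k then l else Suc l)) = (-1) \<cdot>\<^sub>m 1\<^sub>m k"
    by (rule eq_matI) (auto simp: rows)
  also have "corner k n $$ (0, k) = - 2 * int h * (-1)^k"
    using corner_row0[of k n k 0 h] n h' by simp
  finally show ?thesis
    by (simp add: minus_one_power_iff)
qed

lemma det_corner_odd_multiple_Suc:
  assumes n: "n = (2*k + 2) * h + (k + 2)"
  shows "det (corner k n) = (2 * int h + 1) * (-1)^k * (-1)^(k choose 2)"
proof -
  have rows: "corner k n $$ (i, j) = (if i + j = k then 1 else 0)" if "1 \<le> i" "i \<le> k" "j \<le> k" for i j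
    using that corner_entry[of k n i j "j + 1" h] by (auto simp: n)
  have "det (corner k n) = corner k n $$ (0, k) * (-1)^k *
      det (mat k k (\<lambda>(i, l). corner k n $$ (Suc i, if l < k then l else Suc l)))"
    by (rule det_expand_column_top[OF corner_carrier]) (auto simp: rows)
  also have "mat k k (\<lambda>(i, l). corner k n $$ (Suc i, if l < k then l else Suc l)) =
      mat k k (\<lambda>(i, j). if i + j + 1 = k then 1 else 0)"
    by (rule eq_matI) (auto simp: rows)
  also have "corner k n $$ (0, k) = 2 * int h + 1"
    using corner_row0[of k n k "k + 1" h] n by (simp add: minus_one_power_iff)
  also have "det (mat k k (\<lambda>(i, j). if i + j + 1 = k then 1 else 0) :: int mat) = (-1)^(k choose 2)"
    by (rule det_antidiagonal)
  finally show ?thesis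
    by simp
qed

lemma det_corner_other_residue:
  assumes n: "n = (k + 1) * q + p" and q: "1 \<le> q" and p: "2 \<le> p" "p \<le> k"
  shows "det (corner k n) = 0"
proof -
  have "(k + 1) * 1 \<le> (k + 1) * q"
    using q by (rule mult_le_mono2)
  then have le: "k + 1 \<le> n"
    using n by simp
  define h where "h = (q - 1) div 2"
  have "q = 2*h + 1 \<or> q = 2*h + 2"
    using q unfolding h_def by presburger
  then show ?thesis
  proof
    assume q: "q = 2*h + 1"
    show ?thesis
    proof (rule det_zero_row[OF corner_carrier, of k])
      fix j
      assume "j < Suc k"
      with le p show "corner k n $$ (k, j) = 0"
        using corner_entry[of k n k j "p + j" h] by (auto simp: n q algebra_simps)
    qed simp
  next
    assume q: "q = 2*h + 2"
    show ?thesis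
    proof (rule det_zero_row[OF corner_carrier, of 1])
      fix j
      assume j: "j < Suc k"
      show "corner k n $$ (1, j) = 0"
      proof (cases "k + 1 + p + j < 2*k + 2")
        case True
        with le p j show ?thesis
          using corner_entry[of k n 1 j "k + 1 + p + j" h] by (auto simp: n q algebra_simps)
      next
        case False
        then have "p + j - (k + 1) < k"
          using p j by linarith
        with False le p j show ?thesis
          using corner_entry[of k n 1 j "p + j - (k + 1)" "h + 1"] by (auto simp: n q algebra_simps)
      qed
    qed (use p in simp)
  qed
qed

lemma det_hankel_eq_det_corner:
  assumes "k + 2 \<le> n"
  shows "det (hankel k n) = (-1)^((k + 1) * (n - (k + 1))) * det (corner k n)"
  using assms by (simp add: det_hankel_eq_det_reduced_mat det_reduced_mat)

lemma det_hankel_multiple: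
  assumes q: "2 \<le> q"
  shows "det (hankel k ((k + 1) * q)) = (-1)^(q * ((k + 1) choose 2) + 1) * (int q - 1)"
proof -
  define h where "h = (q - 1) div 2"
  have "q = 2*h + 1 \<and> 1 \<le> h \<or> q = 2*h + 2"
    using q unfolding h_def by presburger
  then show ?thesis
  proof
    assume h: "q = 2*h + 1 \<and> 1 \<le> h"
    then have "det (corner k ((k + 1) * q)) = - 2 * int h * (-1)^k * (-1)^(k choose 2)"
      by (intro det_corner_odd_multiple) (auto simp: algebra_simps)
    with h show ?thesis
      by (simp add: det_hankel_eq_det_corner Suc_choose_two minus_one_power_iff)
  next
    assume h: "q = 2*h + 2"
    then have "det (corner k ((k + 1) * q)) = (2 * int h + 1) * (-1)^k"
      by (intro det_corner_even_multiple) (auto simp: algebra_simps)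
    with h show ?thesis
      by (simp add: det_hankel_eq_det_corner Suc_choose_two minus_one_power_iff)
  qed
qed

lemma det_hankel_multiple_Suc:
  assumes q: "1 \<le> q"
  shows "det (hankel k ((k + 1) * q + 1)) = (-1)^(q * ((k + 1) choose 2) + k + 1) * int q"
proof -
  define h where "h = q div 2"
  have "q = 2*h \<and> 1 \<le> h \<or> q = 2*h + 1"
    using q unfolding h_def by presburger
  moreover have "k + 2 \<le> (k + 1) * q + 1"
    using mult_le_mono2[OF q, of "k + 1"] by simp
  ultimately show ?thesis
  proof (elim disjE conjE)
    assume h: "q = 2*h" "1 \<le> h" and n: "k + 2 \<le> (k + 1) * q + 1"
    then have "det (corner k ((k + 1) * q + 1)) = - 2 * int h * (-1)^k"
      by (intro det_corner_even_multiple_Suc) (auto simp: algebra_simps)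
    with h n show ?thesis
      by (simp add: det_hankel_eq_det_corner Suc_choose_two minus_one_power_iff)
  next
    assume h: "q = 2*h + 1" and n: "k + 2 \<le> (k + 1) * q + 1"
    then have "det (corner k ((k + 1) * q + 1)) = (2 * int h + 1) * (-1)^k * (-1)^(k choose 2)"
      by (intro det_corner_odd_multiple_Suc) (auto simp: algebra_simps)
    with h n show ?thesis
      by (simp add: det_hankel_eq_det_corner Suc_choose_two minus_one_power_iff)
  qed
qed

lemma det_hankel_small:
  assumes "0 < n" "n \<le> k + 1"
  shows "det (hankel k n) = 0"
proof (rule det_zero_row[of _ n 0])
  fix j
  assume "j < n"
  with assms show "hankel k n $$ (0, j) = 0"
    by (auto simp: hankel_def intro!: motzkin_paths_eq_0_below)
qed (use assms in \<open>simp_all add: hankel_def\<close>)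

lemma det_hankel_other_residue:
  assumes p: "2 \<le> n mod (k + 1)"
  shows "det (hankel k n) = 0"
proof (cases "n \<le> k + 1")
  case True
  moreover have "0 < n"
    using p by (cases n) auto
  ultimately show ?thesis
    by (intro det_hankel_small)
next
  case False
  define q where "q = n div (k + 1)"
  have n: "n = (k + 1) * q + n mod (k + 1)"
    unfolding q_def by (metis div_mult_mod_eq mult.commute)
  have "1 \<le> q"
    using False div_le_mono[of "k + 1" n "k + 1"] unfolding q_def by simp
  moreover have "n mod (k + 1) \<le> k"
    by (simp add: less_Suc_eq_le)
  ultimately show ?thesis
    using n p False det_corner_other_residue[OF n] by (simp add: det_hankel_eq_det_corner)
qed

theorem det_hankel:
  assumes "1 \<le> n"
  shows "det (hankel k n) =
    (if n mod (k + 1) = 0 then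
       (-1) ^ ((n div (k + 1)) * ((k + 1) choose 2) + 1) * (int (n div (k + 1)) - 1)
     else if n mod (k + 1) = 1 then
       (-1) ^ ((n div (k + 1)) * ((k + 1) choose 2) + k + 1) * int (n div (k + 1))
     else 0)"
proof -
  define q where "q = n div (k + 1)"
  have n: "n = (k + 1) * q + n mod (k + 1)"
    unfolding q_def by (metis div_mult_mod_eq mult.commute)
  consider "n mod (k + 1) = 0" "q = 1" | "n mod (k + 1) = 0" "2 \<le> q"
    | "n mod (k + 1) = 1" "q = 0" | "n mod (k + 1) = 1" "1 \<le> q" | "2 \<le> n mod (k + 1)"
  proof -
    have "q \<noteq> 0" if "n mod (k + 1) = 0"
      using that assms n by (cases q) auto
    with that show thesis
      by (cases "n mod (k + 1) = 0"; cases "n mod (k + 1) = 1"; cases "q = 0"; cases "q = 1") auto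
  qed
  then show ?thesis
  proof cases
    case 1
    with n show ?thesis by (simp add: q_def det_hankel_small)
  next
    case 2
    then have "n = (k + 1) * q"
      using n by simp
    with 2 det_hankel_multiple[of q k] show ?thesis
      unfolding q_def[symmetric] by simp
  next
    case 3
    with n show ?thesis by (simp add: q_def det_hankel_small)
  next
    case 4
    then have "n = (k + 1) * q + 1"
      using n by simp
    with 4 det_hankel_multiple_Suc[of q k] show ?thesis
      unfolding q_def[symmetric] by simp
  next
    case 5
    then show ?thesis by (simp add: det_hankel_other_residue)
  qed
qed

lemma thm19_entry_eq_motzkin_paths:
  "thm19_entry k i j = (if i + j = 0 then 0 else of_int (motzkin_paths k (i + j - 1) 0))"
proof (cases "i + j")
  case (Suc m)
  have "of_nat (2*k + 2) * of_nat ((2*m + 1) choose (m + k + 1)) =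
      (of_nat (m + k + 2) :: rat) * of_int (motzkin_paths k m 0)"
    using arg_cong[OF motzkin_paths_to_ground[of k m], of rat_of_int] by simp
  moreover have "2*i + 2*j - 1 = 2*m + 1" "i + j + k = m + k + 1" "i + j + k + 1 = m + k + 2"
    using Suc by simp_all
  ultimately show ?thesis
    using Suc by (simp add: thm19_entry_def field_simps)
qed (simp add: thm19_entry_def)

theorem theorem19:
  fixes n k :: nat
  assumes "n \<ge> 1"
  shows "det (mat n n (\<lambda>(i, j). thm19_entry k i j)) =
    (if n mod (k + 1) = 0 then
       (-1) ^ ((n div (k + 1)) * ((k + 1) choose 2) + 1) * (of_nat (n div (k + 1)) - 1)
     else if n mod (k + 1) = 1 then
       (-1) ^ ((n div (k + 1)) * ((k + 1) choose 2) + k + 1) * of_nat (n div (k + 1))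
     else 0)"
proof -
  have "mat n n (\<lambda>(i, j). thm19_entry k i j) = map_mat rat_of_int (hankel k n)"
    by (rule eq_matI) (auto simp: hankel_def thm19_entry_eq_motzkin_paths)
  then have "det (mat n n (\<lambda>(i, j). thm19_entry k i j)) = rat_of_int (det (hankel k n))"
    by simp
  then show ?thesis
    unfolding det_hankel[OF assms] by simp
qed

end
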